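(* Let $\succ$ be a binary relation on $\mathcal{F}$ satisfying Axioms A1–A7 below. Then for all $f\in\mathcal{F}$ and $x,y,z\in X$, if $f\Join x$, $f\succ y$ and $z\succ f$, then $z\succ x$ and $x\succ y$. Axioms: (A1) $\succ$ is asymmetric and transitive, and its restriction to $X$ is non-trivial and negatively transitive. (A2) For all $f,g,h\in\mathcal{F}$, $\{\alpha\in[0,1]:\alpha f+(1-\alpha)g\succ h\}$ and $\{\alpha\in[0,1]:h\succ\alpha f+(1-\alpha)g\}$ are open in $[0,1]$. (A3) For all $f,g\in\mathcal{F}$, $x\in X$, $\alpha\in(0,1)$: $f\succ g$ iff $\alpha f+(1-\alpha)x\succ\alpha g+(1-\alpha)x$. (A4) For all $x\in X$, $\{f:f\succ x\}$ and $\{f:x\succ f\}$ are convex. (A5) If $f(s)\succ g(s)$ for all $s\in S$ then $f\succ g$. (A6) If for all $x\in X$, $f\Join x$ implies $g\Join x$, then $f\Join g$. (A7) If $f\Join x$, $x\succ g$, $g\Join y$, $f\succ y$ (with $x,y\in X$), then $f\succ g$.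
   Context: $S$ is a set of states with algebra $\Sigma$; $X$ is a non-singleton convex subset of a real vector space; $\mathcal{F}$ is the set of simple acts $f:S\to X$ ($\Sigma$-measurable, finitely many values) with pointwise mixtures; elements of $X$ are identified with constant acts. $f\Join g$ means $f\not\succ g$ and $g\not\succ f$. *)

theory Defs
  imports "HOL-Analysis.Analysis"
begin

text \<open>States: the type 'a (S = UNIV). Sigma: an algebra on S. Outcomes X: subset of real vector space 'b.\<close>

definition simple_acts :: "'a set set \<Rightarrow> 'b set \<Rightarrow> ('a \<Rightarrow> 'b) set" where
  "simple_acts \<Sigma> X = {f. range f \<subseteq> X \<and> finite (range f) \<and> (\<forall>x. f -` {x} \<in> \<Sigma>)}"

definition cst :: "'b \<Rightarrow> ('a \<Rightarrow> 'b)" where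
  "cst x = (\<lambda>_. x)"

definition mix :: "real \<Rightarrow> ('a \<Rightarrow> 'b::real_vector) \<Rightarrow> ('a \<Rightarrow> 'b) \<Rightarrow> ('a \<Rightarrow> 'b)" where
  "mix \<alpha> f g = (\<lambda>s. \<alpha> *\<^sub>R f s + (1 - \<alpha>) *\<^sub>R g s)"

definition unc :: "(('a \<Rightarrow> 'b) \<Rightarrow> ('a \<Rightarrow> 'b) \<Rightarrow> bool) \<Rightarrow> ('a \<Rightarrow> 'b) \<Rightarrow> ('a \<Rightarrow> 'b) \<Rightarrow> bool" where
  "unc P f g \<longleftrightarrow> \<not> P f g \<and> \<not> P g f"

definition A1 where
  "A1 \<Sigma> X P \<longleftrightarrow>
     (\<forall>f\<in>simple_acts \<Sigma> X. \<forall>g\<in>simple_acts \<Sigma> X. P f g \<longrightarrow> \<not> P g f) \<and>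
     (\<forall>f\<in>simple_acts \<Sigma> X. \<forall>g\<in>simple_acts \<Sigma> X. \<forall>h\<in>simple_acts \<Sigma> X.
        P f g \<and> P g h \<longrightarrow> P f h) \<and>
     (\<exists>x\<in>X. \<exists>y\<in>X. P (cst x) (cst y)) \<and>
     (\<forall>x\<in>X. \<forall>y\<in>X. \<forall>z\<in>X. \<not> P (cst x) (cst y) \<and> \<not> P (cst y) (cst z) \<longrightarrow> \<not> P (cst x) (cst z))"

definition A2 where
  "A2 \<Sigma> X P \<longleftrightarrow>
     (\<forall>f\<in>simple_acts \<Sigma> X. \<forall>g\<in>simple_acts \<Sigma> X. \<forall>h\<in>simple_acts \<Sigma> X.
        openin (top_of_set {0..1}) {\<alpha>\<in>{0..1::real}. P (mix \<alpha> f g) h} \<and>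
        openin (top_of_set {0..1}) {\<alpha>\<in>{0..1::real}. P h (mix \<alpha> f g)})"

definition A3 where
  "A3 \<Sigma> X P \<longleftrightarrow>
     (\<forall>f\<in>simple_acts \<Sigma> X. \<forall>g\<in>simple_acts \<Sigma> X. \<forall>x\<in>X. \<forall>\<alpha>\<in>{0<..<1::real}.
        P f g \<longleftrightarrow> P (mix \<alpha> f (cst x)) (mix \<alpha> g (cst x)))"

definition A4 where
  "A4 \<Sigma> X P \<longleftrightarrow>
     (\<forall>x\<in>X. \<forall>f\<in>simple_acts \<Sigma> X. \<forall>g\<in>simple_acts \<Sigma> X. \<forall>\<alpha>\<in>{0..1::real}.
        (P f (cst x) \<and> P g (cst x) \<longrightarrow> P (mix \<alpha> f g) (cst x)) \<and>
        (P (cst x) f \<and> P (cst x) g \<longrightarrow> P (cst x) (mix \<alpha> f g)))"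

definition A5 where
  "A5 \<Sigma> X P \<longleftrightarrow>
     (\<forall>f\<in>simple_acts \<Sigma> X. \<forall>g\<in>simple_acts \<Sigma> X.
        (\<forall>s. P (cst (f s)) (cst (g s))) \<longrightarrow> P f g)"

definition A6 where
  "A6 \<Sigma> X P \<longleftrightarrow>
     (\<forall>f\<in>simple_acts \<Sigma> X. \<forall>g\<in>simple_acts \<Sigma> X.
        (\<forall>x\<in>X. unc P f (cst x) \<longrightarrow> unc P g (cst x)) \<longrightarrow> unc P f g)"

definition A7 where
  "A7 \<Sigma> X P \<longleftrightarrow>
     (\<forall>f\<in>simple_acts \<Sigma> X. \<forall>g\<in>simple_acts \<Sigma> X. \<forall>x\<in>X. \<forall>y\<in>X.
        unc P f (cst x) \<and> P (cst x) g \<and> unc P g (cst y) \<and> P f (cst y) \<longrightarrow> P f g)"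

end

theory Submission
  imports Defs
begin

text \<open>
  Suppose \<open>z \<succ> f\<close> and \<open>f \<Join> x\<close> but not \<open>z \<succ> x\<close>.
  Transitivity rules out \<open>x \<succ> z\<close>, so \<open>x \<Join> z\<close>. Since \<open>f\<close> and \<open>z\<close> are comparable, A6 yields a
  constant \<open>w\<close> with \<open>f \<Join> w\<close> that is comparable with \<open>z\<close>. Now \<open>w \<succ> z\<close> would give \<open>w \<succ> f\<close>,
  while \<open>z \<succ> w\<close> gives \<open>x \<succ> w\<close> by negative transitivity, and then A7 applied to
  \<open>x \<Join> z\<close>, \<open>z \<succ> f\<close>, \<open>f \<Join> w\<close>, \<open>x \<succ> w\<close> gives \<open>x \<succ> f\<close>. The claim \<open>x \<succ> y\<close> is the same
  statement for the converse relation, and A1, A6 and A7 are invariant under passing to the converse.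
\<close>

lemma cst_in_simple_acts:
  assumes "algebra UNIV \<Sigma>" and "x \<in> X"
  shows "cst x \<in> simple_acts \<Sigma> X"
proof -
  interpret algebra UNIV \<Sigma>
    by (fact assms(1))
  have "cst x -` {v} \<in> {UNIV, {}}" for v
    by (auto simp: cst_def)
  then show ?thesis
    using assms(2) top by (auto simp: simple_acts_def cst_def)
qed

lemma unc_conversep [simp]: "unc P\<inverse>\<inverse> = unc P"
  by (auto simp: unc_def fun_eq_iff)

lemma A1_conversep: "A1 \<Sigma> X P \<Longrightarrow> A1 \<Sigma> X P\<inverse>\<inverse>"
  unfolding A1_def by blast

lemma A6_conversep: "A6 \<Sigma> X P \<Longrightarrow> A6 \<Sigma> X P\<inverse>\<inverse>"
  unfolding A6_def by simp

lemma A7_conversep: "A7 \<Sigma> X P \<Longrightarrow> A7 \<Sigma> X P\<inverse>\<inverse>"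
  unfolding A7_def by simp blast

lemma upper_bound_of_act_above_unc_const:
  assumes "algebra UNIV \<Sigma>" and "A1 \<Sigma> X P" and "A6 \<Sigma> X P" and "A7 \<Sigma> X P"
    and f: "f \<in> simple_acts \<Sigma> X" and x: "x \<in> X" and z: "z \<in> X"
    and fx: "unc P f (cst x)" and zf: "P (cst z) f"
  shows "P (cst z) (cst x)"
proof (rule ccontr)
  assume not_zx: "\<not> P (cst z) (cst x)"
  note cst_act = cst_in_simple_acts[OF assms(1)]
  have trans: "P g h \<Longrightarrow> P h k \<Longrightarrow> P g k"
    if "g \<in> simple_acts \<Sigma> X" "h \<in> simple_acts \<Sigma> X" "k \<in> simple_acts \<Sigma> X" for g h k
    using assms(2) that unfolding A1_def by blast
  have neg_trans: "P (cst a) (cst c) \<Longrightarrow> P (cst a) (cst b) \<or> P (cst b) (cst c)"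
    if "a \<in> X" "b \<in> X" "c \<in> X" for a b c
    using assms(2) that unfolding A1_def by blast
  have not_xz: "\<not> P (cst x) (cst z)"
    using trans[OF cst_act[OF x] cst_act[OF z] f] zf fx by (auto simp: unc_def)
  have "\<not> unc P f (cst z)"
    using zf by (simp add: unc_def)
  then obtain w where w: "w \<in> X" and fw: "unc P f (cst w)" and zw: "\<not> unc P (cst z) (cst w)"
    using assms(3) f cst_act[OF z] unfolding A6_def by blast
  show False
  proof (cases "P (cst w) (cst z)")
    case True
    then have "P (cst w) f"
      using trans[OF cst_act[OF w] cst_act[OF z] f] zf by blast
    then show False
      using fw by (simp add: unc_def)
  next
    case False
    with zw have "P (cst z) (cst w)"
      by (simp add: unc_def)
    then have xw: "P (cst x) (cst w)"
      using neg_trans[OF z x w] not_zx by blast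
    have "unc P (cst x) (cst z)"
      using not_xz not_zx by (simp add: unc_def)
    then have "P (cst x) f"
      using assms(4) cst_act[OF x] f z w zf fw xw unfolding A7_def by blast
    then show False
      using fx by (simp add: unc_def)
  qed
qed

theorem lemma1:
  fixes \<Sigma> :: "'a set set" and X :: "'b::real_vector set"
    and P :: "('a \<Rightarrow> 'b) \<Rightarrow> ('a \<Rightarrow> 'b) \<Rightarrow> bool"
  assumes "algebra UNIV \<Sigma>"
    and "convex X" and "\<exists>x\<in>X. \<exists>y\<in>X. x \<noteq> y"
    and "A1 \<Sigma> X P" and "A2 \<Sigma> X P" and "A3 \<Sigma> X P" and "A4 \<Sigma> X P"
    and "A5 \<Sigma> X P" and "A6 \<Sigma> X P" and "A7 \<Sigma> X P"
    and "f \<in> simple_acts \<Sigma> X" and "x \<in> X" and "y \<in> X" and "z \<in> X"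
    and "unc P f (cst x)" and "P f (cst y)" and "P (cst z) f"
  shows "P (cst z) (cst x) \<and> P (cst x) (cst y)"
proof
  show "P (cst z) (cst x)"
    using assms(1,4,9-12,14,15,17) by (rule upper_bound_of_act_above_unc_const)
  have "unc P\<inverse>\<inverse> f (cst x)" and "P\<inverse>\<inverse> (cst y) f"
    using assms(15,16) by simp_all
  then have "P\<inverse>\<inverse> (cst y) (cst x)"
    using assms(1) A1_conversep[OF assms(4)] A6_conversep[OF assms(9)] A7_conversep[OF assms(10)]
      assms(11,13,12) by (intro upper_bound_of_act_above_unc_const)
  then show "P (cst x) (cst y)"
    by simp
qed

end
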